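(* Let $X$ be a log-normal random variable with parameters $\mu\in\mathbb{R}$ and $\sigma^2>0$, i.e. with density $f(x)=\frac{1}{x\sqrt{2\pi\sigma^2}}\exp\left\{-\frac{(\log x-\mu)^2}{2\sigma^2}\right\}$ on $(0,\infty)$. Then $X$ is truly mode positively skewed.
   Context: For $p\ge 1$ and a continuous random variable $X$ with $E[|X|^{p-1}]<\infty$, the $p$-mean $\nu_p$ is the unique real solution $\nu$ of $E[(X-\nu)_+^{p-1}]=E[(\nu-X)_+^{p-1}]$; its domain is $\mathcal{D}=\{p\ge1:E[|X|^{p-1}]<\infty\}$. For a unimodal distribution, $\nu_0$ denotes the mode and $\mathcal{D}_0=\mathcal{D}\cup\{0\}$. A unimodal distribution is truly mode positively skewed if $p\mapsto\nu_p$ is increasing on $\mathcal{D}_0$. *)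

theory Defs
  imports "HOL-Probability.Probability"
begin

definition lognormal_density :: "real \<Rightarrow> real \<Rightarrow> real \<Rightarrow> real" where
  "lognormal_density mu sigma2 x =
     (if x > 0 then exp (- ((ln x - mu)\<^sup>2) / (2 * sigma2)) / (x * sqrt (2 * pi * sigma2)) else 0)"

text \<open>Positive part raised to a power: (t)_+^a, with (t)_+^0 read as the indicator of t > 0.\<close>
definition pos_pow :: "real \<Rightarrow> real \<Rightarrow> real" where
  "pos_pow t a = (if t > 0 then t powr a else 0)"

definition pmean_domain :: "real measure \<Rightarrow> real set" where
  "pmean_domain N = {p. p \<ge> 1 \<and> integrable N (\<lambda>x. \<bar>x\<bar> powr (p - 1))}"

definition pmean :: "real measure \<Rightarrow> real \<Rightarrow> real" where
  "pmean N p = (THE nu. (\<integral>x. pos_pow (x - nu) (p - 1) \<partial>N) = (\<integral>x. pos_pow (nu - x) (p - 1) \<partial>N))"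

definition unimodal_density :: "(real \<Rightarrow> real) \<Rightarrow> bool" where
  "unimodal_density f \<longleftrightarrow> (\<exists>m. mono_on {..m} f \<and> antimono_on {m..} f)"

definition density_mode :: "(real \<Rightarrow> real) \<Rightarrow> real" where
  "density_mode f = (THE m. \<forall>x. x \<noteq> m \<longrightarrow> f x < f m)"

definition truly_mode_pos_skewed :: "real measure \<Rightarrow> (real \<Rightarrow> real) \<Rightarrow> bool" where
  "truly_mode_pos_skewed N f \<longleftrightarrow>
     unimodal_density f \<and>
     strict_mono_on (pmean_domain N \<union> {0}) (\<lambda>p. if p = 0 then density_mode f else pmean N p)"

end

theory Submission
  imports Defs
begin

text \<open>
  With r = p - 1, the p-mean of a density f is the root of the decreasing function
  G_r(\<nu>) = E[sgn(X - \<nu>) |X - \<nu>|^r] = \<integral>_0^\<infinity> t^r (f(\<nu> + t) - f(\<nu> - t)) dt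
  (moment_gap r \<nu> below). For the log-normal density with mode m = e^(\<mu> - \<sigma>^2),
  f(y) \<le> f(x) for 0 < y < x iff xy \<le> m^2, so f(\<nu> + t) - f(\<nu> - t) changes sign at most
  once on t > 0, from - to +, at \<tau> = sqrt(max 0 (\<nu>^2 - m^2)). Writing
  t^r' = t^r (t^(r'-r) - \<tau>^(r'-r)) + \<tau>^(r'-r) t^r, the first summand contributes a positive
  integral, so G_r(\<nu>) = 0 forces G_r'(\<nu>) > 0 for r' > r: the roots increase with r.
  At \<nu> = m the difference is positive for all t > 0, so G_r(m) > 0 and the mode lies below
  every p-mean.
\<close>

section \<open>Positive and signed powers\<close>

definition signed_pow :: "real \<Rightarrow> real \<Rightarrow> real" where
  "signed_pow t r = pos_pow t r - pos_pow (- t) r"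

lemma borel_measurable_pos_pow [measurable]:
  fixes f :: "'a \<Rightarrow> real"
  assumes [measurable]: "f \<in> borel_measurable M"
  shows "(\<lambda>x. pos_pow (f x) r) \<in> borel_measurable M"
  unfolding pos_pow_def by measurable

lemma borel_measurable_signed_pow [measurable]:
  fixes f :: "'a \<Rightarrow> real"
  assumes [measurable]: "f \<in> borel_measurable M"
  shows "(\<lambda>x. signed_pow (f x) r) \<in> borel_measurable M"
  unfolding signed_pow_def by measurable

lemma pos_pow_nonneg: "0 \<le> pos_pow t r"
  by (simp add: pos_pow_def)

lemma pos_pow_pos: "0 < t \<Longrightarrow> 0 < pos_pow t r"
  by (simp add: pos_pow_def)

lemma pos_pow_eq_0: "t \<le> 0 \<Longrightarrow> pos_pow t r = 0"
  by (simp add: pos_pow_def)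

lemma pos_pow_mono: "s \<le> t \<Longrightarrow> 0 \<le> r \<Longrightarrow> pos_pow s r \<le> pos_pow t r"
  by (auto simp: pos_pow_def intro!: powr_mono2)

lemma pos_pow_mult: "pos_pow t a * pos_pow t b = pos_pow t (a + b)"
  by (simp add: pos_pow_def powr_add)

lemma isCont_pos_pow:
  assumes "t \<noteq> 0"
  shows "isCont (\<lambda>t. pos_pow t r) t"
proof (cases "t > 0")
  case True
  have "eventually (\<lambda>u. pos_pow u r = u powr r) (nhds t)"
    using eventually_nhds_in_open[of "{0<..}" t] True
    by (auto elim!: eventually_mono simp: pos_pow_def)
  with True show ?thesis
    by (subst isCont_cong) (auto intro!: continuous_intros)
next
  case False
  with assms have "eventually (\<lambda>u. pos_pow u r = 0) (nhds t)"
    using eventually_nhds_in_open[of "{..<0}" t]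
    by (auto elim!: eventually_mono simp: pos_pow_def)
  then show ?thesis
    by (subst isCont_cong) auto
qed

lemma pos_pow_le_sum_powr:
  assumes "t \<le> x + B" "0 < x" "0 \<le> B" "0 \<le> r"
  shows "pos_pow t r \<le> 2 powr r * (x powr r + B powr r)"
proof -
  have "pos_pow t r \<le> pos_pow (2 * max x B) r"
    using assms by (intro pos_pow_mono) auto
  also have "\<dots> = 2 powr r * max x B powr r"
    using assms by (simp add: pos_pow_def powr_mult)
  also have "max x B powr r \<le> x powr r + B powr r"
    by (simp add: max_def)
  finally show ?thesis
    by (simp add: mult_left_mono)
qed

lemma abs_signed_pow: "\<bar>signed_pow t r\<bar> = pos_pow \<bar>t\<bar> r"
  by (simp add: signed_pow_def pos_pow_def)

lemma signed_pow_mono: "s \<le> t \<Longrightarrow> 0 \<le> r \<Longrightarrow> signed_pow s r \<le> signed_pow t r"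
  unfolding signed_pow_def by (intro diff_mono pos_pow_mono) auto

lemma signed_pow_pos: "0 < t \<Longrightarrow> 0 < signed_pow t r"
  by (simp add: signed_pow_def pos_pow_def)

lemma signed_pow_neg: "t < 0 \<Longrightarrow> signed_pow t r < 0"
  by (simp add: signed_pow_def pos_pow_def)

text \<open>Here pos_pow (1 - x) 0 is the indicator of x < 1: the bound splits off an upper tail of
  order 1/\<nu> from a fixed negative contribution of (0, 1).\<close>

lemma signed_pow_le_tail_bound:
  assumes "0 < x" "2 \<le> \<nu>" "0 \<le> r"
  shows "signed_pow (x - \<nu>) r \<le> pos_pow x (r + 1) / \<nu> - pos_pow (1 - x) 0"
proof -
  consider "x < 1" | "1 \<le> x" "x \<le> \<nu>" | "\<nu> < x"
    by linarith
  then show ?thesis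
  proof cases
    case 1
    then have "1 \<le> (\<nu> - x) powr r"
      using assms by (intro ge_one_powr_ge_zero) auto
    moreover have "0 \<le> pos_pow x (r + 1) / \<nu>"
      using assms by (simp add: pos_pow_nonneg)
    moreover have "signed_pow (x - \<nu>) r = - ((\<nu> - x) powr r)" "pos_pow (1 - x) 0 = 1"
      using 1 assms by (simp_all add: signed_pow_def pos_pow_def)
    ultimately show ?thesis
      by linarith
  next
    case 2
    then have "signed_pow (x - \<nu>) r \<le> 0" "pos_pow (1 - x) 0 = 0"
      by (simp_all add: signed_pow_def pos_pow_def)
    moreover have "0 \<le> pos_pow x (r + 1) / \<nu>"
      using assms by (simp add: pos_pow_nonneg)
    ultimately show ?thesis
      by linarith
  next
    case 3
    have "(x - \<nu>) powr r \<le> x powr r"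
      using 3 assms by (intro powr_mono2) auto
    also have "\<nu> * x powr r \<le> x * x powr r"
      using 3 by (intro mult_right_mono) auto
    then have "x powr r \<le> x powr (r + 1) / \<nu>"
      using 3 assms by (simp add: powr_add field_simps)
    finally show ?thesis
      using 3 assms by (simp add: signed_pow_def pos_pow_def)
  qed
qed

lemma isCont_signed_pow: "t \<noteq> 0 \<Longrightarrow> isCont (\<lambda>t. signed_pow t r) t"
  unfolding signed_pow_def
  by (intro continuous_intros isCont_pos_pow
      continuous_at_compose[OF _ isCont_pos_pow, unfolded o_def]) auto

lemma lborel_integral_pos_on_interval:
  fixes g :: "real \<Rightarrow> real"
  assumes g: "integrable lborel g" and nonneg: "\<And>x. 0 \<le> g x" and "a < b"
    and pos: "\<And>x. a < x \<Longrightarrow> x < b \<Longrightarrow> 0 < g x"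
  shows "0 < integral\<^sup>L lborel g"
proof -
  have "integral\<^sup>L lborel g \<noteq> 0"
  proof
    assume "integral\<^sup>L lborel g = 0"
    then have "AE x in lborel. g x = 0"
      using integral_nonneg_eq_0_iff_AE[OF g] nonneg by simp
    then have "AE x in lborel. x \<notin> {a<..<b}"
      by eventually_elim (use pos in force)
    then have "emeasure lborel {a<..<b} = 0"
      by (subst (asm) AE_iff_measurable[where N="{a<..<b}"]) auto
    with \<open>a < b\<close> show False
      by simp
  qed
  moreover have "0 \<le> integral\<^sup>L lborel g"
    using nonneg by simp
  ultimately show ?thesis
    by simp
qed

lemma mult_powr_diff_nonneg_if_sign_change:
  fixes d :: real
  assumes "0 < t" "0 \<le> \<tau>" "0 < k" "t \<le> \<tau> \<Longrightarrow> d \<le> 0" "\<tau> \<le> t \<Longrightarrow> 0 \<le> d"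
  shows "0 \<le> d * (t powr k - \<tau> powr k)"
proof (cases "t \<le> \<tau>")
  case True
  then have "t powr k \<le> \<tau> powr k"
    using assms by (intro powr_mono2) auto
  with True assms show ?thesis
    by (simp add: mult_nonpos_nonpos)
next
  case False
  then have "\<tau> powr k \<le> t powr k"
    using assms by (intro powr_mono2) auto
  with False assms show ?thesis
    by simp
qed

lemma integral_pos_pow_sign_change:
  fixes D :: "real \<Rightarrow> real"
  assumes "r1 < r2" "0 \<le> \<tau>"
    and int1: "integrable lborel (\<lambda>t. pos_pow t r1 * D t)"
    and int2: "integrable lborel (\<lambda>t. pos_pow t r2 * D t)"
    and below: "\<And>t. 0 < t \<Longrightarrow> t \<le> \<tau> \<Longrightarrow> D t \<le> 0"
    and above: "\<And>t. 0 < t \<Longrightarrow> \<tau> \<le> t \<Longrightarrow> 0 \<le> D t"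
    and eventually_pos: "\<And>t. c < t \<Longrightarrow> 0 < D t"
    and lower_nonneg: "0 \<le> (\<integral>t. pos_pow t r1 * D t \<partial>lborel)"
  shows "0 < (\<integral>t. pos_pow t r2 * D t \<partial>lborel)"
proof -
  define k where "k = r2 - r1"
  define c0 where "c0 = \<tau> powr k"
  define G where "G t = pos_pow t r1 * D t * (pos_pow t k - c0)" for t
  have k: "0 < k"
    using \<open>r1 < r2\<close> by (simp add: k_def)
  have G_eq: "G t = pos_pow t r2 * D t - c0 * (pos_pow t r1 * D t)" for t
    using pos_pow_mult[of t r1 k] by (simp add: G_def k_def algebra_simps)
  have "0 < integral\<^sup>L lborel G"
  proof (rule lborel_integral_pos_on_interval[where a="max \<tau> c" and b="max \<tau> c + 1"])
    show "integrable lborel G"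
      unfolding G_eq using int1 int2 by simp
    show "0 \<le> G t" for t
    proof (cases "0 < t")
      case True
      then have "0 \<le> D t * (pos_pow t k - c0)"
        using mult_powr_diff_nonneg_if_sign_change[OF True \<open>0 \<le> \<tau>\<close> k below above]
        by (simp add: pos_pow_def c0_def)
      then show ?thesis
        unfolding G_def mult.assoc by (simp add: pos_pow_nonneg)
    qed (simp add: G_def pos_pow_eq_0)
    show "0 < G t" if "max \<tau> c < t" "t < max \<tau> c + 1" for t
    proof -
      have "\<tau> powr k < t powr k"
        using that \<open>0 \<le> \<tau>\<close> k by (intro powr_less_mono2) auto
      then have "0 < pos_pow t k - c0"
        using that \<open>0 \<le> \<tau>\<close> by (simp add: pos_pow_def c0_def)
      then show ?thesis
        unfolding G_def using that \<open>0 \<le> \<tau>\<close> by (simp add: eventually_pos pos_pow_pos)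
    qed
  qed simp
  moreover have "integral\<^sup>L lborel G
      = (\<integral>t. pos_pow t r2 * D t \<partial>lborel) - c0 * (\<integral>t. pos_pow t r1 * D t \<partial>lborel)"
    unfolding G_eq using int1 int2 by simp
  moreover have "0 \<le> c0"
    by (simp add: c0_def)
  ultimately show ?thesis
    using mult_nonneg_nonneg[OF _ lower_nonneg, of c0] by linarith
qed

section \<open>Densities on the positive half-line\<close>

lemma integrable_if_distributed:
  assumes "prob_space M" "distributed M lborel X (\<lambda>x. ennreal (g x))" "\<And>x. 0 \<le> g x"
  shows "integrable lborel g"
proof -
  have "integrable lborel (\<lambda>x. g x * 1) \<longleftrightarrow> integrable M (\<lambda>x. 1 :: real)"
    using assms by (intro distributed_integrable) auto
  moreover have "integrable M (\<lambda>x. 1 :: real)"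
    using assms(1) by (simp add: prob_space.finite_measure finite_measure.integrable_const)
  ultimately show ?thesis
    by simp
qed

lemma density_mode_eqI:
  assumes "\<And>x. x \<noteq> m \<Longrightarrow> f x < f m"
  shows "density_mode f = m"
  unfolding density_mode_def
  by (rule the_equality) (use assms in \<open>auto dest: less_asym\<close>)

locale halfline_density =
  fixes f :: "real \<Rightarrow> real"
  assumes density_nonneg: "\<And>x. 0 \<le> f x"
    and density_eq_0: "\<And>x. x \<le> 0 \<Longrightarrow> f x = 0"
    and density_pos: "\<And>x. 0 < x \<Longrightarrow> 0 < f x"
    and integrable_moment: "\<And>r. 0 \<le> r \<Longrightarrow> integrable lborel (\<lambda>x. f x * pos_pow x r)"
begin

definition moment_gap :: "real \<Rightarrow> real \<Rightarrow> real" where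
  "moment_gap r \<nu> = (\<integral>x. f x * signed_pow (x - \<nu>) r \<partial>lborel)"

definition moment_envelope :: "real \<Rightarrow> real \<Rightarrow> real \<Rightarrow> real" where
  "moment_envelope B r x = 2 powr r * (f x * pos_pow x r + B powr r * f x)"

lemma integrable_density: "integrable lborel f"
proof -
  have "(\<lambda>x. f x * pos_pow x 0) = f"
    by (auto simp: fun_eq_iff pos_pow_def density_eq_0)
  then show ?thesis
    using integrable_moment[of 0] by simp
qed

lemma borel_measurable_density [measurable]: "f \<in> borel_measurable borel"
  using borel_measurable_integrable[OF integrable_density] by simp

lemma integrable_moment_envelope: "0 \<le> r \<Longrightarrow> integrable lborel (moment_envelope B r)"
  unfolding moment_envelope_def
  by (intro integrable_mult_right Bochner_Integration.integrable_add integrable_moment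
      integrable_density)

lemma shifted_moment_le_envelope:
  assumes "\<bar>\<nu>\<bar> \<le> B" "0 \<le> r"
  shows "f x * pos_pow \<bar>x - \<nu>\<bar> r \<le> moment_envelope B r x"
proof (cases "0 < x")
  case True
  have "pos_pow \<bar>x - \<nu>\<bar> r \<le> 2 powr r * (x powr r + B powr r)"
    using assms True by (intro pos_pow_le_sum_powr) auto
  then have "f x * pos_pow \<bar>x - \<nu>\<bar> r \<le> f x * (2 powr r * (x powr r + B powr r))"
    by (rule mult_left_mono) (rule density_nonneg)
  with True show ?thesis
    by (simp add: moment_envelope_def pos_pow_def algebra_simps)
qed (simp add: moment_envelope_def density_eq_0)

lemma integrable_shifted_moment:
  assumes [measurable]: "g \<in> borel_measurable borel"
    and g_le: "\<And>t. \<bar>g t\<bar> \<le> pos_pow \<bar>t\<bar> r" and "0 \<le> r"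
  shows "integrable lborel (\<lambda>x. f x * g (x - \<nu>))"
proof (rule Bochner_Integration.integrable_bound)
  show "integrable lborel (moment_envelope \<bar>\<nu>\<bar> r)"
    using \<open>0 \<le> r\<close> by (rule integrable_moment_envelope)
  have "\<bar>f x * g (x - \<nu>)\<bar> \<le> f x * pos_pow \<bar>x - \<nu>\<bar> r" for x
    using mult_left_mono[OF g_le density_nonneg] by (simp add: abs_mult density_nonneg)
  also have "f x * pos_pow \<bar>x - \<nu>\<bar> r \<le> moment_envelope \<bar>\<nu>\<bar> r x" for x
    using \<open>0 \<le> r\<close> by (simp add: shifted_moment_le_envelope)
  finally have "\<bar>f x * g (x - \<nu>)\<bar> \<le> moment_envelope \<bar>\<nu>\<bar> r x" for x .
  then show "AE x in lborel. norm (f x * g (x - \<nu>)) \<le> norm (moment_envelope \<bar>\<nu>\<bar> r x)"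
    by (auto intro!: AE_I2 order_trans[OF _ abs_ge_self])
qed simp

lemma integrable_upper_moment:
  assumes "0 \<le> r"
  shows "integrable lborel (\<lambda>x. f x * pos_pow (x - \<nu>) r)"
proof -
  have "\<bar>pos_pow t r\<bar> \<le> pos_pow \<bar>t\<bar> r" for t
    using pos_pow_mono[of t "\<bar>t\<bar>" r] assms by (simp add: pos_pow_nonneg)
  then show ?thesis
    using integrable_shifted_moment[of "\<lambda>t. pos_pow t r" r \<nu>] assms by simp
qed

lemma integrable_lower_moment:
  assumes "0 \<le> r"
  shows "integrable lborel (\<lambda>x. f x * pos_pow (\<nu> - x) r)"
proof -
  have "\<bar>pos_pow (- t) r\<bar> \<le> pos_pow \<bar>t\<bar> r" for t
    using pos_pow_mono[of "- t" "\<bar>t\<bar>" r] assms by (simp add: pos_pow_nonneg)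
  then show ?thesis
    using integrable_shifted_moment[of "\<lambda>t. pos_pow (- t) r" r \<nu>] assms by simp
qed

lemma integrable_signed_moment:
  "0 \<le> r \<Longrightarrow> integrable lborel (\<lambda>x. f x * signed_pow (x - \<nu>) r)"
  by (rule integrable_shifted_moment) (simp_all add: abs_signed_pow)

lemma moment_gap_eq_diff:
  assumes "0 \<le> r"
  shows "moment_gap r \<nu>
    = (\<integral>x. f x * pos_pow (x - \<nu>) r \<partial>lborel) - (\<integral>x. f x * pos_pow (\<nu> - x) r \<partial>lborel)"
  unfolding moment_gap_def signed_pow_def
  using integrable_upper_moment[OF assms] integrable_lower_moment[OF assms]
  by (simp add: right_diff_distrib)

lemma moment_gap_symmetric:
  assumes "0 \<le> r"
  shows "integrable lborel (\<lambda>t. pos_pow t r * (f (\<nu> + t) - f (\<nu> - t)))"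
    and "moment_gap r \<nu> = (\<integral>t. pos_pow t r * (f (\<nu> + t) - f (\<nu> - t)) \<partial>lborel)"
proof -
  have upper: "integrable lborel (\<lambda>t. f (\<nu> + t) * pos_pow t r)"
    using lborel_integrable_real_affine[OF integrable_upper_moment[OF assms, of \<nu>], of 1 \<nu>] by simp
  have lower: "integrable lborel (\<lambda>t. f (\<nu> - t) * pos_pow t r)"
    using lborel_integrable_real_affine[OF integrable_lower_moment[OF assms, of \<nu>], of "-1" \<nu>] by simp
  have eq: "pos_pow t r * (f (\<nu> + t) - f (\<nu> - t))
      = f (\<nu> + t) * pos_pow t r - f (\<nu> - t) * pos_pow t r" for t
    by (simp add: algebra_simps)
  show "integrable lborel (\<lambda>t. pos_pow t r * (f (\<nu> + t) - f (\<nu> - t)))"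
    unfolding eq using upper lower by simp
  have "(\<integral>x. f x * pos_pow (x - \<nu>) r \<partial>lborel) = (\<integral>t. f (\<nu> + t) * pos_pow t r \<partial>lborel)"
    using lborel_integral_real_affine[of 1 "\<lambda>x. f x * pos_pow (x - \<nu>) r" \<nu>] by simp
  moreover have "(\<integral>x. f x * pos_pow (\<nu> - x) r \<partial>lborel) = (\<integral>t. f (\<nu> - t) * pos_pow t r \<partial>lborel)"
    using lborel_integral_real_affine[of "-1" "\<lambda>x. f x * pos_pow (\<nu> - x) r" \<nu>] by simp
  ultimately show "moment_gap r \<nu> = (\<integral>t. pos_pow t r * (f (\<nu> + t) - f (\<nu> - t)) \<partial>lborel)"
    unfolding eq moment_gap_eq_diff[OF assms] using upper lower by simp
qed

lemma moment_gap_pos_if_nonpos: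
  assumes "\<nu> \<le> 0" "0 \<le> r"
  shows "0 < moment_gap r \<nu>"
  unfolding moment_gap_def
proof (rule lborel_integral_pos_on_interval[where a=0 and b=1])
  show "0 \<le> f x * signed_pow (x - \<nu>) r" for x
    using assms
    by (cases "0 < x")
      (auto simp: density_eq_0 intro!: less_imp_le mult_pos_pos density_pos signed_pow_pos)
qed (use assms in \<open>auto intro!: integrable_signed_moment mult_pos_pos density_pos signed_pow_pos\<close>)

lemma moment_gap_strict_antimono:
  assumes "a < b" "0 < b" "0 \<le> r"
  shows "moment_gap r b < moment_gap r a"
proof -
  have "0 < (\<integral>x. f x * signed_pow (x - a) r - f x * signed_pow (x - b) r \<partial>lborel)"
  proof (rule lborel_integral_pos_on_interval[where a="max a 0" and b=b])
    show "0 \<le> f x * signed_pow (x - a) r - f x * signed_pow (x - b) r" for x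
      using mult_left_mono[OF signed_pow_mono[of "x - b" "x - a" r] density_nonneg] assms by simp
    show "0 < f x * signed_pow (x - a) r - f x * signed_pow (x - b) r" if "max a 0 < x" "x < b" for x
      using that signed_pow_pos[of "x - a" r] signed_pow_neg[of "x - b" r] density_pos[of x]
      by (simp add: mult_pos_neg)
  qed (use assms in \<open>auto intro!: integrable_signed_moment\<close>)
  then show ?thesis
    unfolding moment_gap_def using integrable_signed_moment[OF assms(3)] by simp
qed

lemma moment_gap_unique_root:
  assumes "moment_gap r a = 0" "moment_gap r b = 0" "0 \<le> r"
  shows "a = b"
proof -
  have "0 < a" "0 < b"
    using moment_gap_pos_if_nonpos[of a r] moment_gap_pos_if_nonpos[of b r] assms by force+
  then show ?thesis
    using moment_gap_strict_antimono[of a b r] moment_gap_strict_antimono[of b a r] assms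
    by (cases a b rule: linorder_cases) auto
qed

lemma less_root_if_moment_gap_pos:
  assumes "0 < moment_gap r \<nu>" "moment_gap r \<nu>' = 0" "0 \<le> r"
  shows "\<nu> < \<nu>'"
proof (rule ccontr)
  assume "\<not> \<nu> < \<nu>'"
  moreover have "0 < \<nu>'"
    using moment_gap_pos_if_nonpos[of \<nu>' r] assms by force
  ultimately show False
    using moment_gap_strict_antimono[of \<nu>' \<nu> r] assms by (cases "\<nu>' = \<nu>") auto
qed

lemma moment_gap_continuous_on:
  assumes "0 \<le> r"
  shows "continuous_on {a..b} (moment_gap r)"
proof (rule continuous_on_sequentiallyI)
  fix u c
  assume u: "\<forall>n. u n \<in> {a..b}" and "c \<in> {a..b}" and lim: "u \<longlonglongrightarrow> c"
  define B where "B = \<bar>a\<bar> + \<bar>b\<bar>"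
  have "\<bar>u n\<bar> \<le> B" for n
    using u[rule_format, of n] by (auto simp: B_def)
  show "(\<lambda>n. moment_gap r (u n)) \<longlonglongrightarrow> moment_gap r c"
    unfolding moment_gap_def
  proof (rule integral_dominated_convergence[where w="moment_envelope B r"])
    show "AE x in lborel. (\<lambda>n. f x * signed_pow (x - u n) r) \<longlonglongrightarrow> f x * signed_pow (x - c) r"
      using AE_lborel_singleton[of c]
    proof eventually_elim
      case (elim x)
      then show ?case
        by (intro tendsto_mult_left isCont_tendsto_compose[OF isCont_signed_pow] tendsto_intros lim)
          simp
    qed
    show "AE x in lborel. norm (f x * signed_pow (x - u n) r) \<le> moment_envelope B r x" for n
      using shifted_moment_le_envelope[OF \<open>\<bar>u n\<bar> \<le> B\<close> assms]
      by (simp add: abs_mult abs_signed_pow density_nonneg)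
  qed (use assms in \<open>simp_all add: integrable_moment_envelope\<close>)
qed

lemma moment_gap_le_tail_bound:
  assumes "2 \<le> \<nu>" "0 \<le> r"
  shows "moment_gap r \<nu> \<le> (\<integral>x. f x * pos_pow x (r + 1) \<partial>lborel) / \<nu>
    - (\<integral>x. f x * pos_pow (1 - x) 0 \<partial>lborel)"
proof -
  have "f x * signed_pow (x - \<nu>) r \<le> f x * pos_pow x (r + 1) / \<nu> - f x * pos_pow (1 - x) 0" for x
  proof (cases "0 < x")
    case True
    then show ?thesis
      using mult_left_mono[OF signed_pow_le_tail_bound[OF True assms] density_nonneg, of x]
      by (simp add: right_diff_distrib)
  qed (simp add: density_eq_0)
  then have "moment_gap r \<nu> \<le> (\<integral>x. f x * pos_pow x (r + 1) / \<nu> - f x * pos_pow (1 - x) 0 \<partial>lborel)"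
    unfolding moment_gap_def using assms
    by (intro integral_mono integrable_signed_moment Bochner_Integration.integrable_diff
        integrable_divide integrable_moment integrable_lower_moment) auto
  also have "\<dots> = (\<integral>x. f x * pos_pow x (r + 1) \<partial>lborel) / \<nu> - (\<integral>x. f x * pos_pow (1 - x) 0 \<partial>lborel)"
    using assms by (simp add: integrable_moment integrable_lower_moment)
  finally show ?thesis .
qed

lemma moment_gap_neg:
  assumes "0 \<le> r"
  obtains \<nu> where "moment_gap r \<nu> < 0"
proof -
  define M where "M = (\<integral>x. f x * pos_pow x (r + 1) \<partial>lborel)"
  define c where "c = (\<integral>x. f x * pos_pow (1 - x) 0 \<partial>lborel)"
  define \<nu> where "\<nu> = max 2 (M / c + 1)"
  have "0 < c"
    unfolding c_def
    by (rule lborel_integral_pos_on_interval[where a=0 and b=1])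
       (auto intro!: integrable_lower_moment mult_nonneg_nonneg mult_pos_pos
         density_nonneg density_pos pos_pow_nonneg pos_pow_pos)
  then have "M / \<nu> < c"
    by (simp add: \<nu>_def divide_less_eq field_simps max_def)
  then have "moment_gap r \<nu> < 0"
    using moment_gap_le_tail_bound[of \<nu> r] assms by (simp add: \<nu>_def M_def c_def)
  then show ?thesis ..
qed

lemma moment_gap_ex1_root:
  assumes "0 \<le> r"
  shows "\<exists>!\<nu>. moment_gap r \<nu> = 0"
proof -
  obtain b where "moment_gap r b < 0"
    using moment_gap_neg[OF assms] .
  moreover have "0 \<le> b"
    using moment_gap_pos_if_nonpos[of b r] assms calculation by force
  ultimately have "\<exists>\<nu>\<ge>0. \<nu> \<le> b \<and> moment_gap r \<nu> = 0"
    using moment_gap_pos_if_nonpos[of 0 r] assms moment_gap_continuous_on[OF assms, of 0 b]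
    by (intro IVT2') auto
  then show ?thesis
    using moment_gap_unique_root[OF _ _ assms] by blast
qed

lemma moment_gap_pmean:
  assumes "1 \<le> p"
  shows "moment_gap (p - 1) (pmean (density lborel (\<lambda>x. ennreal (f x))) p) = 0"
proof -
  have "(\<integral>x. g x \<partial>density lborel (\<lambda>x. ennreal (f x))) = (\<integral>x. f x * g x \<partial>lborel)"
    if [measurable]: "g \<in> borel_measurable borel" for g
    by (rule integral_real_density) (simp_all add: density_nonneg)
  then have "pmean (density lborel (\<lambda>x. ennreal (f x))) p = (THE \<nu>. moment_gap (p - 1) \<nu> = 0)"
    using assms by (simp add: pmean_def moment_gap_eq_diff)
  then show ?thesis
    using theI'[OF moment_gap_ex1_root] assms by simp
qed

lemma moment_gap_pos_if_single_crossing: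
  assumes "0 \<le> r1" "r1 < r2" "0 \<le> \<tau>"
    and below: "\<And>t. 0 < t \<Longrightarrow> t \<le> \<tau> \<Longrightarrow> f (\<nu> + t) \<le> f (\<nu> - t)"
    and above: "\<And>t. 0 < t \<Longrightarrow> \<tau> \<le> t \<Longrightarrow> f (\<nu> - t) \<le> f (\<nu> + t)"
    and "0 \<le> moment_gap r1 \<nu>"
  shows "0 < moment_gap r2 \<nu>"
  unfolding moment_gap_symmetric(2)[OF order.trans[OF assms(1) less_imp_le[OF assms(2)]]]
proof (rule integral_pos_pow_sign_change[where \<tau>=\<tau> and c="\<bar>\<nu>\<bar>"])
  show "0 < f (\<nu> + t) - f (\<nu> - t)" if "\<bar>\<nu>\<bar> < t" for t
    using that by (simp add: density_pos density_eq_0)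
qed (use assms moment_gap_symmetric in auto)

end

section \<open>The log-normal density\<close>

lemma lognormal_density_nonneg: "0 < s \<Longrightarrow> 0 \<le> lognormal_density mu s x"
  by (simp add: lognormal_density_def)

lemma lognormal_density_pos: "0 < s \<Longrightarrow> 0 < x \<Longrightarrow> 0 < lognormal_density mu s x"
  by (simp add: lognormal_density_def)

lemma lognormal_density_eq_0: "x \<le> 0 \<Longrightarrow> lognormal_density mu s x = 0"
  by (simp add: lognormal_density_def)

lemma lognormal_density_eq:
  assumes "0 < s" "0 < x"
  shows "lognormal_density mu s x
    = exp (s / 2 - mu) / sqrt (2 * pi * s) * exp (- ((ln x - (mu - s))\<^sup>2) / (2 * s))"
proof -
  define A where "A = - ((ln x - mu)\<^sup>2) / (2 * s)"
  define C where "C = - ((ln x - (mu - s))\<^sup>2) / (2 * s)"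
  have "A - ln x = (s / 2 - mu) + C"
    using assms by (simp add: A_def C_def field_simps power2_eq_square)
  have "exp A / x = exp (A - ln x)"
    using assms by (simp add: exp_diff)
  also have "\<dots> = exp (s / 2 - mu) * exp C"
    by (simp only: \<open>A - ln x = (s / 2 - mu) + C\<close> exp_add)
  finally have "exp A / x = exp (s / 2 - mu) * exp C" .
  then show ?thesis
    using assms by (simp add: lognormal_density_def A_def C_def field_simps)
qed

lemma lognormal_density_rescale:
  "lognormal_density mu' s x = exp (mu - mu') * lognormal_density mu s (exp (mu - mu') * x)"
proof (cases "0 < x")
  case True
  then have "ln (exp (mu - mu') * x) - mu = ln x - mu'"
    by (simp add: ln_mult)
  with True show ?thesis
    by (simp add: lognormal_density_def)
qed (simp add: lognormal_density_def zero_less_mult_iff)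

lemma lognormal_density_mult_pos_pow:
  assumes "0 < s"
  shows "lognormal_density mu s x * pos_pow x q
    = exp (q * mu + q\<^sup>2 * s / 2) * lognormal_density (mu + q * s) s x"
proof (cases "0 < x")
  case True
  define A where "A = - ((ln x - mu)\<^sup>2) / (2 * s)"
  define C where "C = - ((ln x - (mu + q * s))\<^sup>2) / (2 * s)"
  have "A + q * ln x = (q * mu + q\<^sup>2 * s / 2) + C"
    using assms by (simp add: A_def C_def field_simps power2_eq_square)
  then have "exp A * exp (q * ln x) = exp (q * mu + q\<^sup>2 * s / 2) * exp C"
    by (simp only: exp_add[symmetric])
  with True show ?thesis
    by (simp add: lognormal_density_def pos_pow_def powr_def A_def C_def mult.commute)
qed (simp add: lognormal_density_def pos_pow_def)

lemma integrable_lognormal_density_shift: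
  assumes "integrable lborel (lognormal_density mu s)"
  shows "integrable lborel (lognormal_density mu' s)"
proof -
  have "integrable lborel (\<lambda>x. exp (mu - mu') * lognormal_density mu s (0 + exp (mu - mu') * x))"
    by (intro integrable_mult_right lborel_integrable_real_affine assms) simp
  then show ?thesis
    by (simp flip: lognormal_density_rescale)
qed

lemma integrable_lognormal_moment:
  assumes "0 < s" "integrable lborel (lognormal_density mu s)"
  shows "integrable lborel (\<lambda>x. lognormal_density mu s x * pos_pow x q)"
  unfolding lognormal_density_mult_pos_pow[OF assms(1)]
  by (intro integrable_mult_right integrable_lognormal_density_shift[OF assms(2)])

lemma lognormal_density_le_iff:
  assumes "0 < s" "0 < x" "0 < y"
  shows "lognormal_density mu s y \<le> lognormal_density mu s x
    \<longleftrightarrow> (ln x - (mu - s))\<^sup>2 \<le> (ln y - (mu - s))\<^sup>2"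
  using assms by (simp add: lognormal_density_eq divide_le_cancel mult_less_0_iff)

lemma lognormal_density_le_iff_mult:
  assumes "0 < s" "0 < y" "y < x"
  shows "lognormal_density mu s y \<le> lognormal_density mu s x \<longleftrightarrow> x * y \<le> (exp (mu - s))\<^sup>2"
proof -
  have "0 < x" "ln y < ln x"
    using assms by auto
  have "lognormal_density mu s y \<le> lognormal_density mu s x
      \<longleftrightarrow> (ln x - ln y) * (ln x + ln y - 2 * (mu - s)) \<le> 0"
    using assms \<open>0 < x\<close>
    by (simp add: lognormal_density_le_iff power2_eq_square algebra_simps)
  also have "\<dots> \<longleftrightarrow> ln (x * y) \<le> ln ((exp (mu - s))\<^sup>2)"
    using \<open>ln y < ln x\<close> assms \<open>0 < x\<close> by (simp add: mult_le_0_iff ln_mult ln_realpow)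
  also have "\<dots> \<longleftrightarrow> x * y \<le> (exp (mu - s))\<^sup>2"
    using assms \<open>0 < x\<close> by simp
  finally show ?thesis .
qed

lemma lognormal_density_less_iff_mult:
  assumes "0 < s" "0 < y" "y < x"
  shows "lognormal_density mu s y < lognormal_density mu s x \<longleftrightarrow> x * y < (exp (mu - s))\<^sup>2"
proof -
  have "0 < x" "ln y < ln x"
    using assms by auto
  have "lognormal_density mu s y < lognormal_density mu s x
      \<longleftrightarrow> (ln x - ln y) * (ln x + ln y - 2 * (mu - s)) < 0"
    using assms \<open>0 < x\<close> lognormal_density_le_iff[OF assms(1) assms(2) \<open>0 < x\<close>, of mu]
    by (simp add: not_le[symmetric] power2_eq_square algebra_simps)
  also have "\<dots> \<longleftrightarrow> ln (x * y) < ln ((exp (mu - s))\<^sup>2)"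
    using \<open>ln y < ln x\<close> assms \<open>0 < x\<close> by (simp add: mult_less_0_iff ln_mult ln_realpow)
  also have "\<dots> \<longleftrightarrow> x * y < (exp (mu - s))\<^sup>2"
    using assms \<open>0 < x\<close> by simp
  finally show ?thesis .
qed

lemma lognormal_density_reflect_ge:
  assumes "0 < s" "0 < t" "\<nu>\<^sup>2 - (exp (mu - s))\<^sup>2 \<le> t\<^sup>2"
  shows "lognormal_density mu s (\<nu> - t) \<le> lognormal_density mu s (\<nu> + t)"
proof (cases "0 < \<nu> - t")
  case True
  then show ?thesis
    using assms by (subst lognormal_density_le_iff_mult) (auto simp: algebra_simps power2_eq_square)
qed (simp add: lognormal_density_eq_0 lognormal_density_nonneg assms)

lemma lognormal_density_reflect_less:
  assumes "0 < s" "0 < t" "0 < \<nu> + t" "\<nu>\<^sup>2 - (exp (mu - s))\<^sup>2 < t\<^sup>2"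
  shows "lognormal_density mu s (\<nu> - t) < lognormal_density mu s (\<nu> + t)"
proof (cases "0 < \<nu> - t")
  case True
  then show ?thesis
    using assms by (subst lognormal_density_less_iff_mult) (auto simp: algebra_simps power2_eq_square)
qed (simp add: lognormal_density_eq_0 lognormal_density_pos assms)

lemma lognormal_density_reflect_le:
  assumes "0 < s" "0 < t" "t\<^sup>2 \<le> \<nu>\<^sup>2 - (exp (mu - s))\<^sup>2"
  shows "lognormal_density mu s (\<nu> + t) \<le> lognormal_density mu s (\<nu> - t)"
proof (cases "0 < \<nu> - t")
  case True
  then show ?thesis
    using assms lognormal_density_less_iff_mult[of s "\<nu> - t" "\<nu> + t" mu]
    by (auto simp: algebra_simps power2_eq_square not_less[symmetric])
next
  case False
  have "0 < (exp (mu - s))\<^sup>2"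
    by simp
  with assms(3) have "t\<^sup>2 < \<nu>\<^sup>2"
    by linarith
  then have "t\<^sup>2 < \<bar>\<nu>\<bar>\<^sup>2"
    by simp
  then have "t < \<bar>\<nu>\<bar>"
    by (rule power_less_imp_less_base) simp
  with False have "\<nu> + t \<le> 0"
    by linarith
  then show ?thesis
    by (simp add: lognormal_density_eq_0 lognormal_density_nonneg assms)
qed

lemma lognormal_density_less_at_mode:
  assumes "0 < s" "x \<noteq> exp (mu - s)"
  shows "lognormal_density mu s x < lognormal_density mu s (exp (mu - s))"
proof (cases "0 < x")
  case True
  with assms have "ln x \<noteq> mu - s"
    by (metis exp_ln)
  with True assms show ?thesis
    by (simp add: lognormal_density_le_iff not_le[symmetric])
qed (simp add: lognormal_density_eq_0 lognormal_density_pos assms)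

lemma density_mode_lognormal: "0 < s \<Longrightarrow> density_mode (lognormal_density mu s) = exp (mu - s)"
  by (rule density_mode_eqI) (rule lognormal_density_less_at_mode)

lemma unimodal_lognormal_density:
  assumes "0 < s"
  shows "unimodal_density (lognormal_density mu s)"
  unfolding unimodal_density_def
proof (intro exI conjI)
  show "mono_on {..exp (mu - s)} (lognormal_density mu s)"
  proof (rule mono_onI)
    fix x y
    assume "x \<in> {..exp (mu - s)}" "y \<in> {..exp (mu - s)}" "x \<le> y"
    show "lognormal_density mu s x \<le> lognormal_density mu s y"
    proof (cases "0 < x")
      case True
      with \<open>x \<le> y\<close> \<open>y \<in> {..exp (mu - s)}\<close> have "ln x \<le> ln y" "ln y \<le> mu - s"
        by (auto simp: ln_le_cancel_iff[symmetric, of y "exp (mu - s)"])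
      then have "(mu - s - ln y)\<^sup>2 \<le> (mu - s - ln x)\<^sup>2"
        by (intro power_mono) auto
      with True \<open>x \<le> y\<close> assms show ?thesis
        by (simp add: lognormal_density_le_iff power2_commute)
    qed (simp add: lognormal_density_eq_0 lognormal_density_nonneg assms)
  qed
  show "antimono_on {exp (mu - s)..} (lognormal_density mu s)"
  proof (rule monotone_onI)
    fix x y
    assume "x \<in> {exp (mu - s)..}" "y \<in> {exp (mu - s)..}" "x \<le> y"
    then have "0 < x"
      using less_le_trans[OF exp_gt_zero] by auto
    with \<open>x \<in> {exp (mu - s)..}\<close> \<open>x \<le> y\<close> have "mu - s \<le> ln x" "ln x \<le> ln y"
      by (simp_all add: ln_ge_iff)
    then have "(ln x - (mu - s))\<^sup>2 \<le> (ln y - (mu - s))\<^sup>2"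
      by (intro power_mono) auto
    with \<open>0 < x\<close> \<open>x \<le> y\<close> assms show "lognormal_density mu s y \<le> lognormal_density mu s x"
      by (simp add: lognormal_density_le_iff)
  qed
qed

locale lognormal =
  fixes mu s :: real
  assumes variance_pos: "0 < s"
    and integrable_lognormal_density: "integrable lborel (lognormal_density mu s)"
begin

sublocale halfline_density "lognormal_density mu s"
  using variance_pos integrable_lognormal_density
  by unfold_locales
    (simp_all add: lognormal_density_nonneg lognormal_density_eq_0 lognormal_density_pos
      integrable_lognormal_moment)

lemma moment_gap_pos_at_mode:
  assumes "0 \<le> r"
  shows "0 < moment_gap r (exp (mu - s))"
  unfolding moment_gap_symmetric(2)[OF assms]
proof (rule lborel_integral_pos_on_interval[where a=0 and b=1])
  fix t
  have reflect: "0 < pos_pow t r * (lognormal_density mu s (exp (mu - s) + t)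
      - lognormal_density mu s (exp (mu - s) - t))" if "0 < t"
    using that variance_pos add_pos_pos[OF exp_gt_zero that, of "mu - s"]
      lognormal_density_reflect_less[of s t "exp (mu - s)" mu]
    by (intro mult_pos_pos pos_pow_pos) auto
  then show "0 \<le> pos_pow t r * (lognormal_density mu s (exp (mu - s) + t)
      - lognormal_density mu s (exp (mu - s) - t))"
    by (cases "0 < t") (auto simp: pos_pow_eq_0 less_imp_le)
  show "0 < t \<Longrightarrow> t < 1 \<Longrightarrow> 0 < pos_pow t r * (lognormal_density mu s (exp (mu - s) + t)
      - lognormal_density mu s (exp (mu - s) - t))"
    by (rule reflect)
qed (use moment_gap_symmetric(1)[OF assms] in auto)

lemma moment_gap_pos_if_lower_order_nonneg:
  assumes "0 \<le> r1" "r1 < r2" "0 \<le> moment_gap r1 \<nu>"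
  shows "0 < moment_gap r2 \<nu>"
proof -
  define \<tau> where "\<tau> = sqrt (max 0 (\<nu>\<^sup>2 - (exp (mu - s))\<^sup>2))"
  show ?thesis
  proof (rule moment_gap_pos_if_single_crossing[OF assms(1,2) _ _ _ assms(3)])
    show "0 \<le> \<tau>"
      by (simp add: \<tau>_def)
    show "lognormal_density mu s (\<nu> + t) \<le> lognormal_density mu s (\<nu> - t)"
      if "0 < t" "t \<le> \<tau>" for t
    proof (rule lognormal_density_reflect_le[OF variance_pos \<open>0 < t\<close>])
      have "t\<^sup>2 \<le> \<tau>\<^sup>2"
        using that by (intro power_mono) auto
      with \<open>0 < t\<close> show "t\<^sup>2 \<le> \<nu>\<^sup>2 - (exp (mu - s))\<^sup>2"
        by (auto simp: \<tau>_def max_def split: if_splits)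
    qed
    show "lognormal_density mu s (\<nu> - t) \<le> lognormal_density mu s (\<nu> + t)"
      if "0 < t" "\<tau> \<le> t" for t
    proof (rule lognormal_density_reflect_ge[OF variance_pos \<open>0 < t\<close>])
      have "\<tau>\<^sup>2 \<le> t\<^sup>2"
        using that by (intro power_mono) (auto simp: \<tau>_def)
      then show "\<nu>\<^sup>2 - (exp (mu - s))\<^sup>2 \<le> t\<^sup>2"
        by (simp add: \<tau>_def)
    qed
  qed
qed

lemma pmean_strict_mono:
  assumes "1 \<le> p" "p < q"
  shows "pmean (density lborel (\<lambda>x. ennreal (lognormal_density mu s x))) p
    < pmean (density lborel (\<lambda>x. ennreal (lognormal_density mu s x))) q"
proof (rule less_root_if_moment_gap_pos)
  show "0 < moment_gap (q - 1) (pmean (density lborel (\<lambda>x. ennreal (lognormal_density mu s x))) p)"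
    using assms moment_gap_pmean[of p] by (intro moment_gap_pos_if_lower_order_nonneg[of "p - 1"]) auto
qed (use assms moment_gap_pmean in auto)

lemma mode_less_pmean:
  assumes "1 \<le> q"
  shows "exp (mu - s) < pmean (density lborel (\<lambda>x. ennreal (lognormal_density mu s x))) q"
  using assms by (intro less_root_if_moment_gap_pos[OF moment_gap_pos_at_mode moment_gap_pmean]) auto

end

theorem corollary1:
  fixes M :: "'a measure" and X :: "'a \<Rightarrow> real" and mu sigma2 :: real
  assumes "prob_space M"
    and "sigma2 > 0"
    and "distributed M lborel X (\<lambda>x. ennreal (lognormal_density mu sigma2 x))"
  shows "truly_mode_pos_skewed (distr M lborel X) (lognormal_density mu sigma2)"
proof -
  have "integrable lborel (lognormal_density mu sigma2)"
    using assms(1,3) by (rule integrable_if_distributed) (simp add: lognormal_density_nonneg assms(2))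
  with assms(2) interpret lognormal mu sigma2
    by unfold_locales
  let ?N = "density lborel (\<lambda>x. ennreal (lognormal_density mu sigma2 x))"
  have N: "distr M lborel X = ?N"
    using assms(3) by (simp add: distributed_def)
  show ?thesis
    unfolding truly_mode_pos_skewed_def N density_mode_lognormal[OF assms(2)]
  proof (intro conjI unimodal_lognormal_density assms(2) strict_mono_onI)
    fix p q
    assume "p \<in> pmean_domain ?N \<union> {0}" "q \<in> pmean_domain ?N \<union> {0}" "p < q"
    then have "1 \<le> q" "p = 0 \<or> 1 \<le> p"
      by (auto simp: pmean_domain_def)
    with \<open>p < q\<close> show "(if p = 0 then exp (mu - sigma2) else pmean ?N p)
        < (if q = 0 then exp (mu - sigma2) else pmean ?N q)"
      using mode_less_pmean pmean_strict_mono by auto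
  qed
qed

end
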